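(* Let $s,m$ be positive integers with $n=sm$ odd, and let $k$ be a positive integer with $\gcd(n,k)=1$. Fix $\alpha\in\mathbb{F}_{2^s}\setminus\{0\}$ and let \[ G(x)=x^{2^k+1}+\alpha+\alpha(x^{2^s}+x)^{2^n-1}=\begin{cases}x^{2^k+1}+\alpha, & x\in\mathbb{F}_{2^s},\\ x^{2^k+1}, & x\notin\mathbb{F}_{2^s},\end{cases} \] as a function $\mathbb{F}_{2^n}\to\mathbb{F}_{2^n}$. Then $\delta_{G,c}\leq 6$ for every $c\in\mathbb{F}_{2^s}\setminus\{1\}$. Moreover, if $3\nmid m$, then $\delta_{G,c}\leq 5$ for every $c\in\mathbb{F}_{2^s}\setminus\{1\}$.
   Context: For $F:\mathbb{F}_{2^n}\to\mathbb{F}_{2^n}$ and $c\in\mathbb{F}_{2^n}$, let ${}_c\Delta_F(a,b)=\#\{x\in\mathbb{F}_{2^n}: F(x+a)-cF(x)=b\}$ and the $c$-differential uniformity is $\delta_{F,c}=\max\{{}_c\Delta_F(a,b): a,b\in\mathbb{F}_{2^n},\ a\neq 0\text{ if } c=1\}$. *)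

theory Defs
  imports Main
begin

definition c_delta :: "('a::{field,finite} \<Rightarrow> 'a) \<Rightarrow> 'a \<Rightarrow> 'a \<Rightarrow> 'a \<Rightarrow> nat" where
  "c_delta F c a b = card {x. F (x + a) - c * F x = b}"

definition c_diff_unif :: "('a::{field,finite} \<Rightarrow> 'a) \<Rightarrow> 'a \<Rightarrow> nat" where
  "c_diff_unif F c = Max {c_delta F c a b | a b. a \<noteq> 0 \<or> c \<noteq> 1}"

text \<open>The subfield F_{2^s} of a field with 2^n elements (s dividing n): fixed points of x \<mapsto> x^(2^s).\<close>
definition subfield2 :: "nat \<Rightarrow> 'a::field set" where
  "subfield2 s = {x. x ^ (2 ^ s) = x}"

end

theory Submission
  imports Defs "HOL-Number_Theory.Residues" "HOL-Computational_Algebra.Primes"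
begin

text \<open>
  Write \<open>q = 2^k\<close> and \<open>S = F_(2^s)\<close>. In characteristic 2, \<open>G\<close> is \<open>x^(q+1)\<close> plus \<open>\<alpha>\<close>
  times the indicator of \<open>S\<close>, so according to whether \<open>x\<close> and \<open>x + a\<close> lie in \<open>S\<close> the
  equation \<open>G(x + a) - c G(x) = b\<close> becomes \<open>(x + a)^(q+1) + c x^(q+1) = b'\<close> for a few
  constants \<open>b'\<close>. For \<open>c \<noteq> 1\<close> such an equation has at most 3 roots: given one root \<open>x0\<close>,
  \<open>z = 1/(x - x0)\<close> solves \<open>A + B z + C z^q = 0\<close> with \<open>A = 1 + c \<noteq> 0\<close>, whose solutions form
  a coset of the kernel of \<open>B z + C z^q\<close>, of size at most 2 since \<open>gcd k n = 1\<close>.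

  If \<open>a \<in> S\<close> this gives at most \<open>3 + 3\<close> roots. If moreover \<open>3\<close> does not divide \<open>m\<close>,
  the Frobenius \<open>x \<mapsto> x^(2^s)\<close> permutes the at most 3 roots of an equation with coefficients
  in \<open>S\<close>, and as \<open>m\<close> is prime to 2 and 3 all orbits are trivial; so either no root or all
  roots lie in \<open>S\<close>, and only one of the two equations contributes. If \<open>a \<notin> S\<close>, the two mixed
  cases have at most one root each: comparing two roots in \<open>S\<close> and the Frobenius images of
  their equations shows that their difference solves a linearized equation whose only nonzero
  root \<open>a + a^(2^s)\<close> is not in \<open>S\<close> (\<open>m\<close> being odd).
  This gives at most \<open>1 + 1 + 3\<close> roots.
\<close>

section \<open>Finite fields of characteristic two\<close>

lemma power_card_UNIV_eq_same:
  fixes x :: "'a::{field,finite}"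
  shows "x ^ card (UNIV :: 'a set) = x"
proof (cases "x = 0")
  case False
  define U where "U = \<lparr>carrier = UNIV - {0 :: 'a}, monoid.mult = ((*) :: 'a \<Rightarrow> 'a \<Rightarrow> 'a), one = 1\<rparr>"
  interpret group U
  proof (rule groupI)
    fix y assume "y \<in> carrier U"
    then show "\<exists>z\<in>carrier U. z \<otimes>\<^bsub>U\<^esub> y = \<one>\<^bsub>U\<^esub>"
      by (intro bexI[of _ "inverse y"]) (auto simp: U_def)
  qed (simp_all add: U_def mult.assoc)
  have pow: "y [^]\<^bsub>U\<^esub> (j::nat) = y ^ j" for y :: 'a and j
    by (induction j) (simp_all add: U_def)
  have "x ^ (card (UNIV :: 'a set) - 1) = 1"
    using pow_order_eq_1[of x] False unfolding pow by (simp add: order_def U_def)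
  moreover have "card (UNIV :: 'a set) = Suc (card (UNIV :: 'a set) - 1)"
    using finite_UNIV_card_ge_0[where ?'a = 'a] by simp
  ultimately show ?thesis
    by (metis power_Suc2 mult_1)
qed (use finite_UNIV_card_ge_0[where ?'a = 'a] in auto)

lemma power_card_UNIV_minus_1:
  fixes v :: "'a::{field,finite}"
  shows "v ^ (card (UNIV :: 'a set) - 1) = (if v = 0 then 0 else 1)"
proof -
  have "card {0, 1 :: 'a} \<le> card (UNIV :: 'a set)"
    by (rule card_mono) simp_all
  then have two_le: "2 \<le> card (UNIV :: 'a set)"
    by simp
  show ?thesis
  proof (cases "v = 0")
    case False
    have "v ^ (card (UNIV :: 'a set) - 1) * v = v ^ card (UNIV :: 'a set)"
      using two_le power_Suc2[of v "card (UNIV :: 'a set) - 1"] by simp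
    with False show ?thesis
      by (simp add: power_card_UNIV_eq_same)
  qed (use two_le in simp)
qed

lemma CHAR_eq_2_if_card_eq_power_2:
  assumes "card (UNIV :: 'a::{field,finite} set) = 2 ^ n"
  shows "CHAR('a) = 2"
proof -
  have "prime CHAR('a)"
    by (intro prime_CHAR_semidom finite_imp_CHAR_pos) simp
  moreover have "CHAR('a) dvd 2 ^ n"
    using CHAR_dvd_CARD[where 'a = 'a] assms by simp
  ultimately show ?thesis
    using prime_dvd_power primes_dvd_imp_eq two_is_prime_nat by blast
qed

lemma add_self_CHAR_2:
  fixes x :: "'a::ring_1"
  assumes "CHAR('a) = 2"
  shows "x + x = 0"
  using uminus_CHAR_2[OF assms, of x] by (metis add.right_inverse)

lemma add_add_cancel_CHAR_2:
  fixes x y :: "'a::ring_1"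
  assumes "CHAR('a) = 2"
  shows "x + y + y = x"
  by (simp add: add.assoc add_self_CHAR_2[OF assms])

lemma add_eq_iff_CHAR_2:
  fixes u v w :: "'a::ring_1"
  assumes "CHAR('a) = 2"
  shows "u + v = w \<longleftrightarrow> u = w + v"
  by (metis add_diff_cancel minus_CHAR_2[OF assms] diff_add_cancel)

lemma add_power_two_pow_CHAR_2:
  fixes x y :: "'a::comm_ring_1"
  assumes "CHAR('a) = 2"
  shows "(x + y) ^ (2 ^ j) = x ^ (2 ^ j) + y ^ (2 ^ j)"
  by (rule freshmans_dream') (simp_all add: assms)

lemma diff_power_two_pow_CHAR_2:
  fixes x y :: "'a::comm_ring_1"
  assumes "CHAR('a) = 2"
  shows "(x - y) ^ (2 ^ j) = x ^ (2 ^ j) - y ^ (2 ^ j)"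
  by (simp add: minus_CHAR_2[OF assms] add_power_two_pow_CHAR_2[OF assms])

lemma power_two_pow_inj_CHAR_2:
  fixes x y :: "'a::idom"
  assumes "CHAR('a) = 2" and "x ^ (2 ^ j) = y ^ (2 ^ j)"
  shows "x = y"
  using diff_power_two_pow_CHAR_2[OF assms(1), of x y j] assms(2) by simp

lemma power_power_eq_same_gcd:
  fixes x :: "'a::monoid_mult" and b :: nat
  assumes i: "x ^ (b ^ i) = x" and j: "x ^ (b ^ j) = x"
  shows "x ^ (b ^ gcd i j) = x"
proof (cases "i = 0")
  case False
  have iter: "x ^ (b ^ (l * u)) = x" if "x ^ (b ^ l) = x" for l u
    using that by (induction u) (simp_all add: power_add power_mult)
  obtain u v where uv: "i * u = j * v + gcd i j"
    using bezout_nat[OF False] by blast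
  have "x = x ^ (b ^ (j * v) * b ^ gcd i j)"
    using iter[OF i, of u] by (simp add: uv power_add)
  also have "\<dots> = x ^ (b ^ gcd i j)"
    by (subst power_mult) (simp only: iter[OF j])
  finally show ?thesis ..
qed (use j in simp)

section \<open>Linearized polynomials and the Gold function\<close>

lemma fixed_power_two_pow_coprime:
  fixes t :: "'a::{field,finite}"
  assumes card: "card (UNIV :: 'a set) = 2 ^ n" and "coprime k n" and "t ^ (2 ^ k) = t"
  shows "t = 0 \<or> t = 1"
proof -
  have "t ^ (2 ^ n) = t"
    using power_card_UNIV_eq_same[of t] card by simp
  then have "t ^ (2 ^ gcd k n) = t"
    by (rule power_power_eq_same_gcd[OF assms(3)])
  then have "t ^ 2 = t"
    using assms(2) by simp
  then have "t * (t - 1) = 0"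
    by (simp add: right_diff_distrib power2_eq_square)
  then show ?thesis
    by simp
qed

lemma linearized_root_unique:
  fixes B C w w' :: "'a::{field,finite}"
  assumes card: "card (UNIV :: 'a set) = 2 ^ n" and cop: "coprime k n" and BC: "B \<noteq> 0 \<or> C \<noteq> 0"
    and w: "B * w + C * w ^ (2 ^ k) = 0" "w \<noteq> 0"
    and w': "B * w' + C * w' ^ (2 ^ k) = 0" "w' \<noteq> 0"
  shows "w = w'"
proof -
  have C: "C \<noteq> 0"
    using BC w by auto
  have e: "C * w ^ (2 ^ k) = - (B * w)" and e': "C * w' ^ (2 ^ k) = - (B * w')"
    using w(1) w'(1) by (simp_all only: add_eq_0_iff)
  have "C * (w ^ (2 ^ k) * w') = (C * w ^ (2 ^ k)) * w'"
    by (simp only: mult.assoc)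
  also have "\<dots> = (C * w' ^ (2 ^ k)) * w"
    by (simp add: e e' mult_ac)
  also have "\<dots> = C * (w' ^ (2 ^ k) * w)"
    by (simp only: mult.assoc)
  finally have "C * (w ^ (2 ^ k) * w') = C * (w' ^ (2 ^ k) * w)" .
  then have "(w / w') ^ (2 ^ k) = w / w'"
    using C w'(2) by (simp add: power_divide field_simps)
  then have "w / w' = 0 \<or> w / w' = 1"
    by (rule fixed_power_two_pow_coprime[OF card cop])
  then have "w / w' = 1"
    using w(2) w'(2) by simp
  then show ?thesis
    using w'(2) by simp
qed

lemma card_linearized_roots_le_2:
  fixes B C :: "'a::{field,finite}"
  assumes card: "card (UNIV :: 'a set) = 2 ^ n" and "coprime k n" and "B \<noteq> 0 \<or> C \<noteq> 0"
  shows "card {w. B * w + C * w ^ (2 ^ k) = 0} \<le> 2"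
proof (cases "\<exists>w0. w0 \<noteq> 0 \<and> B * w0 + C * w0 ^ (2 ^ k) = 0")
  case True
  then obtain w0 where "w0 \<noteq> 0" "B * w0 + C * w0 ^ (2 ^ k) = 0"
    by blast
  then have "{w. B * w + C * w ^ (2 ^ k) = 0} \<subseteq> {0, w0}"
    using linearized_root_unique[OF assms] by blast
  then have "card {w. B * w + C * w ^ (2 ^ k) = 0} \<le> card {0, w0}"
    by (intro card_mono) simp_all
  also have "\<dots> \<le> 2"
    by (simp add: card_insert_if)
  finally show ?thesis .
next
  case False
  then have "{w. B * w + C * w ^ (2 ^ k) = 0} \<subseteq> {0}"
    by blast
  then have "card {w. B * w + C * w ^ (2 ^ k) = 0} \<le> card {0 :: 'a}"
    by (intro card_mono) simp_all
  then show ?thesis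
    by simp
qed

lemma card_affine_linearized_roots_le_2:
  fixes A B C :: "'a::{field,finite}"
  assumes card: "card (UNIV :: 'a set) = 2 ^ n" and cop: "coprime k n" and "A \<noteq> 0"
  shows "card {z. A + B * z + C * z ^ (2 ^ k) = 0} \<le> 2"
proof (cases "\<exists>z1. A + B * z1 + C * z1 ^ (2 ^ k) = 0")
  case True
  then obtain z1 where z1: "A + B * z1 + C * z1 ^ (2 ^ k) = 0"
    by blast
  with \<open>A \<noteq> 0\<close> have BC: "B \<noteq> 0 \<or> C \<noteq> 0"
    by auto
  have char: "CHAR('a) = 2"
    using CHAR_eq_2_if_card_eq_power_2[OF card] .
  have "(\<lambda>z. z - z1) ` {z. A + B * z + C * z ^ (2 ^ k) = 0} \<subseteq> {w. B * w + C * w ^ (2 ^ k) = 0}"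
  proof clarsimp
    fix z assume z: "A + B * z + C * z ^ (2 ^ k) = 0"
    have "B * (z - z1) + C * (z - z1) ^ (2 ^ k)
        = (A + B * z + C * z ^ (2 ^ k)) - (A + B * z1 + C * z1 ^ (2 ^ k))"
      by (simp add: diff_power_two_pow_CHAR_2[OF char] algebra_simps)
    then show "B * (z - z1) + C * (z - z1) ^ (2 ^ k) = 0"
      using z z1 by simp
  qed
  then have "card {z. A + B * z + C * z ^ (2 ^ k) = 0} \<le> card {w. B * w + C * w ^ (2 ^ k) = 0}"
    by (rule card_inj_on_le[rotated]) (simp_all add: inj_on_def)
  then show ?thesis
    using card_linearized_roots_le_2[OF card cop BC] by simp
qed simp

lemma gold_shift_expansion:
  fixes x y a c :: "'a::comm_ring_1"
  assumes "CHAR('a) = 2"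
  shows "(x + y + a) ^ (2 ^ k + 1) + c * (x + y) ^ (2 ^ k + 1)
       = (x + a) ^ (2 ^ k + 1) + c * x ^ (2 ^ k + 1)
         + ((1 + c) * y ^ (2 ^ k + 1) + ((1 + c) * x + a) * y ^ 2 ^ k
            + ((1 + c) * x ^ 2 ^ k + a ^ 2 ^ k) * y)"
proof -
  define q :: nat where "q = 2 ^ k"
  have "(x + y + a) ^ q = x ^ q + y ^ q + a ^ q" "(x + y) ^ q = x ^ q + y ^ q"
    "(x + a) ^ q = x ^ q + a ^ q"
    by (simp_all add: q_def add_power_two_pow_CHAR_2[OF assms])
  then show ?thesis
    unfolding q_def[symmetric] power_add power_one_right by (simp add: algebra_simps)
qed

lemma card_gold_cdiff_roots_le_3:
  fixes a b c :: "'a::{field,finite}"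
  assumes card: "card (UNIV :: 'a set) = 2 ^ n" and cop: "coprime k n" and "c \<noteq> 1"
  shows "card {x. (x + a) ^ (2 ^ k + 1) + c * x ^ (2 ^ k + 1) = b} \<le> 3"
proof (cases "\<exists>x0. (x0 + a) ^ (2 ^ k + 1) + c * x0 ^ (2 ^ k + 1) = b")
  case True
  define q :: nat where "q = 2 ^ k"
  define R where "R = {x. (x + a) ^ (q + 1) + c * x ^ (q + 1) = b}"
  obtain x0 where x0: "x0 \<in> R"
    using True by (auto simp: R_def q_def)
  have char: "CHAR('a) = 2"
    using CHAR_eq_2_if_card_eq_power_2[OF card] .
  define A where "A = 1 + c"
  define B where "B = (1 + c) * x0 + a"
  define C where "C = (1 + c) * x0 ^ q + a ^ q"
  have "A \<noteq> 0"
    using \<open>c \<noteq> 1\<close> add_eq_iff_CHAR_2[OF char, of 1 c 0] by (auto simp: A_def)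
  \<comment> \<open>Inverting \<open>x - x0\<close> turns the remaining roots into roots of an affine linearized polynomial.\<close>
  have sub: "(\<lambda>x. inverse (x - x0)) ` (R - {x0}) \<subseteq> {z. A + B * z + C * z ^ q = 0}"
  proof clarsimp
    fix x assume x: "x \<in> R" "x \<noteq> x0"
    define y where "y = x - x0"
    have y: "y \<noteq> 0" "x = x0 + y"
      using x(2) by (simp_all add: y_def)
    have "(x0 + a) ^ (q + 1) + c * x0 ^ (q + 1) + (A * y ^ (q + 1) + B * y ^ q + C * y) = b"
      using x(1) gold_shift_expansion[OF char, of x0 y a k c]
      unfolding R_def y(2) A_def B_def C_def q_def by simp
    then have E: "A * y ^ (q + 1) + B * y ^ q + C * y = 0"
      using x0 by (simp add: R_def)
    have "inverse y ^ (q + 1) * (A * y ^ (q + 1) + B * y ^ q + C * y)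
        = A * (y * inverse y) ^ (q + 1) + B * (y * inverse y) ^ q * inverse y
          + C * (y * inverse y) * inverse y ^ q"
      by (simp add: power_mult_distrib algebra_simps)
    then show "A + B * inverse (x - x0) + C * inverse (x - x0) ^ q = 0"
      using y(1) E by (simp add: y_def[symmetric])
  qed
  have "inj_on (\<lambda>x. inverse (x - x0)) (R - {x0})"
    by (rule inj_onI) simp
  then have "card (R - {x0}) \<le> card {z. A + B * z + C * z ^ q = 0}"
    using sub by (intro card_inj_on_le) simp_all
  then have "card (R - {x0}) \<le> 2"
    using card_affine_linearized_roots_le_2[OF card cop \<open>A \<noteq> 0\<close>, of B C] by (simp add: q_def)
  then show ?thesis
    using x0 by (simp add: R_def q_def card_Diff_singleton)
qed simp

lemma inj_gold:
  assumes card: "card (UNIV :: 'a::{field,finite} set) = 2 ^ n" and "coprime k n" and "odd n"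
  shows "inj (\<lambda>x::'a. x ^ (2 ^ k + 1))"
proof (rule injI)
  fix x y :: 'a
  assume eq: "x ^ (2 ^ k + 1) = y ^ (2 ^ k + 1)"
  show "x = y"
  proof (cases "y = 0")
    case False
    define t where "t = x / y"
    have t: "t ^ (2 ^ k + 1) = 1"
      using eq False by (simp add: t_def power_divide)
    then have "t \<noteq> 0"
      by (rule contrapos_pn) simp
    with t have "t ^ (2 ^ k) = inverse t"
      by (simp add: power_add field_simps)
    then have "t ^ (2 ^ (2 * k)) = t"
      by (simp add: mult_2 power_add power_mult power_inverse)
    moreover have "coprime (2 * k) n"
      using assms(2,3) by simp
    ultimately have "t = 1"
      using fixed_power_two_pow_coprime[OF card] \<open>t \<noteq> 0\<close> by blast
    then show ?thesis
      using False by (simp add: t_def)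
  qed (use eq in simp)
qed

section \<open>The subfield of order 2^s\<close>

lemma one_mem_subfield2: "1 \<in> subfield2 s"
  by (simp add: subfield2_def)

lemma subfield2_add:
  fixes x y :: "'a::field"
  assumes "CHAR('a) = 2" and "x \<in> subfield2 s" and "y \<in> subfield2 s"
  shows "x + y \<in> subfield2 s"
  using assms by (simp add: subfield2_def add_power_two_pow_CHAR_2)

lemma subfield2_mult:
  "x \<in> subfield2 s \<Longrightarrow> y \<in> subfield2 s \<Longrightarrow> x * y \<in> subfield2 s"
  by (simp add: subfield2_def power_mult_distrib)

lemma subfield2_power:
  assumes "x \<in> subfield2 s"
  shows "x ^ j \<in> subfield2 s"
proof -
  have "(x ^ j) ^ (2 ^ s) = (x ^ (2 ^ s)) ^ j"
    by (simp flip: power_mult add: mult.commute)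
  with assms show ?thesis
    by (simp add: subfield2_def)
qed

lemma power_two_pow_mult_eq_same:
  assumes "x \<in> subfield2 s"
  shows "x ^ (2 ^ (s * i)) = x"
proof -
  have "x ^ ((2 ^ s) ^ i) = x"
    using assms by (induction i) (simp_all add: subfield2_def power_mult)
  then show ?thesis
    by (simp add: power_mult)
qed

lemma mem_subfield2_if_coprime:
  fixes x :: "'a::{field,finite}"
  assumes card: "card (UNIV :: 'a set) = 2 ^ (s * m)" and "coprime d m" and "x ^ (2 ^ (s * d)) = x"
  shows "x \<in> subfield2 s"
proof -
  have "x ^ (2 ^ (s * m)) = x"
    using power_card_UNIV_eq_same[of x] card by simp
  then have "x ^ (2 ^ gcd (s * d) (s * m)) = x"
    by (rule power_power_eq_same_gcd[OF assms(3)])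
  then show ?thesis
    using assms(2) by (simp add: subfield2_def flip: gcd_mult_distrib_nat)
qed

lemma mem_subfield2_if_add_frobenius_mem:
  fixes a :: "'a::{field,finite}"
  assumes card: "card (UNIV :: 'a set) = 2 ^ (s * m)" and "odd m"
    and "a + a ^ (2 ^ s) \<in> subfield2 s"
  shows "a \<in> subfield2 s"
proof -
  have char: "CHAR('a) = 2"
    using CHAR_eq_2_if_card_eq_power_2[OF card] .
  have "a ^ (2 ^ s) + a ^ (2 ^ (s * 2)) = a + a ^ (2 ^ s)"
    using assms(3)
    by (simp add: subfield2_def add_power_two_pow_CHAR_2[OF char] power_add power_mult mult_2_right)
  then have "a ^ (2 ^ (s * 2)) = a"
    by (simp add: add.commute)
  then show ?thesis
    using mem_subfield2_if_coprime[OF card, of 2] \<open>odd m\<close> by (simp add: coprime_left_2_iff_odd)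
qed

section \<open>Roots of c-differences of the Gold function\<close>

lemma shift_form_power_two_pow:
  fixes c1 c2 x a :: "'a::comm_ring_1"
  assumes "CHAR('a) = 2"
  shows "(c1 * (x + a) ^ N + c2 * x ^ N) ^ (2 ^ j)
       = c1 ^ (2 ^ j) * (x ^ (2 ^ j) + a ^ (2 ^ j)) ^ N + c2 ^ (2 ^ j) * (x ^ (2 ^ j)) ^ N"
proof -
  have swap: "(u ^ N) ^ (2 ^ j) = (u ^ (2 ^ j)) ^ N" for u :: 'a
    by (simp flip: power_mult add: mult.commute)
  show ?thesis
    by (simp add: add_power_two_pow_CHAR_2[OF assms] power_mult_distrib swap)
qed

lemma gold_second_difference:
  fixes x z a a' :: "'a::comm_ring_1"
  assumes "CHAR('a) = 2"
  shows "((x + a) ^ (2 ^ k + 1) - (x + a') ^ (2 ^ k + 1)) - ((z + a) ^ (2 ^ k + 1) - (z + a') ^ (2 ^ k + 1))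
       = (a - a') ^ (2 ^ k) * (x - z) + (a - a') * (x - z) ^ (2 ^ k)"
proof -
  define q :: nat where "q = 2 ^ k"
  have frob: "(x + a) ^ q = x ^ q + a ^ q" "(x + a') ^ q = x ^ q + a' ^ q"
    "(z + a) ^ q = z ^ q + a ^ q" "(z + a') ^ q = z ^ q + a' ^ q"
    "(a - a') ^ q = a ^ q - a' ^ q" "(x - z) ^ q = x ^ q - z ^ q"
    by (simp_all add: q_def add_power_two_pow_CHAR_2[OF assms] diff_power_two_pow_CHAR_2[OF assms])
  show ?thesis
    unfolding q_def[symmetric] power_add power_one_right frob by (simp add: algebra_simps)
qed

lemma card_subfield2_shift_form_roots_le_1:
  fixes a b c1 c2 :: "'a::{field,finite}"
  assumes card: "card (UNIV :: 'a set) = 2 ^ n" and n: "n = s * m" "odd n" and cop: "coprime k n"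
    and c1: "c1 \<in> subfield2 s" and c2: "c2 \<in> subfield2 s" and c12: "c1 \<noteq> 0 \<or> c2 \<noteq> 0"
    and a: "a \<notin> subfield2 s"
  shows "card {x \<in> subfield2 s. c1 * (x + a) ^ (2 ^ k + 1) + c2 * x ^ (2 ^ k + 1) = b} \<le> 1"
proof -
  define X where "X = {x \<in> subfield2 s. c1 * (x + a) ^ (2 ^ k + 1) + c2 * x ^ (2 ^ k + 1) = b}"
  have char: "CHAR('a) = 2"
    using CHAR_eq_2_if_card_eq_power_2[OF card] .
  have "x1 = x2" if x1: "x1 \<in> X" and x2: "x2 \<in> X" for x1 x2
  proof (cases "c1 = 0")
    case True
    with x1 x2 have "c2 * x1 ^ (2 ^ k + 1) = c2 * x2 ^ (2 ^ k + 1)"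
      by (simp add: X_def)
    with True c12 have "x1 ^ (2 ^ k + 1) = x2 ^ (2 ^ k + 1)"
      by simp
    then show ?thesis
      by (rule injD[OF inj_gold[OF card cop \<open>odd n\<close>]])
  next
    case False
    define a' where "a' = a ^ (2 ^ s)"
    define e where "e = a - a'"
    \<comment> \<open>Applying the Frobenius of the subfield moves only the shift \<open>a\<close>.\<close>
    have conj: "c1 * ((x + a) ^ (2 ^ k + 1) - (x + a') ^ (2 ^ k + 1)) = b - b ^ (2 ^ s)" if "x \<in> X" for x
    proof -
      have hx: "c1 * (x + a) ^ (2 ^ k + 1) + c2 * x ^ (2 ^ k + 1) = b"
        using that by (simp add: X_def)
      have "(c1 * (x + a) ^ (2 ^ k + 1) + c2 * x ^ (2 ^ k + 1)) ^ (2 ^ s)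
          = c1 ^ (2 ^ s) * (x ^ (2 ^ s) + a') ^ (2 ^ k + 1) + c2 ^ (2 ^ s) * (x ^ (2 ^ s)) ^ (2 ^ k + 1)"
        unfolding a'_def by (rule shift_form_power_two_pow[OF char])
      then have hb: "c1 * (x + a') ^ (2 ^ k + 1) + c2 * x ^ (2 ^ k + 1) = b ^ (2 ^ s)"
        using that c1 c2 by (simp add: hx X_def subfield2_def)
      have "c1 * ((x + a) ^ (2 ^ k + 1) - (x + a') ^ (2 ^ k + 1))
          = (c1 * (x + a) ^ (2 ^ k + 1) + c2 * x ^ (2 ^ k + 1))
            - (c1 * (x + a') ^ (2 ^ k + 1) + c2 * x ^ (2 ^ k + 1))"
        by (simp add: algebra_simps)
      then show ?thesis
        unfolding hx hb .
    qed
    have "c1 * ((x1 + a) ^ (2 ^ k + 1) - (x1 + a') ^ (2 ^ k + 1))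
        = c1 * ((x2 + a) ^ (2 ^ k + 1) - (x2 + a') ^ (2 ^ k + 1))"
      using conj[OF x1] conj[OF x2] by (simp only:)
    then have "(x1 + a) ^ (2 ^ k + 1) - (x1 + a') ^ (2 ^ k + 1) - ((x2 + a) ^ (2 ^ k + 1) - (x2 + a') ^ (2 ^ k + 1)) = 0"
      using False by (simp only: mult_cancel_left right_minus_eq) simp
    then have y: "e ^ (2 ^ k) * (x1 - x2) + e * (x1 - x2) ^ (2 ^ k) = 0"
      unfolding e_def gold_second_difference[OF char, symmetric] .
    have e0: "e \<noteq> 0"
      using a by (simp add: e_def a'_def subfield2_def)
    have ee: "e ^ (2 ^ k) * e + e * e ^ (2 ^ k) = 0"
      using add_self_CHAR_2[OF char, of "e * e ^ (2 ^ k)"] by (simp add: mult.commute)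
    show ?thesis
    proof (rule ccontr)
      assume "x1 \<noteq> x2"
      then have "x1 - x2 = e"
        using linearized_root_unique[OF card cop _ y _ ee e0] e0 by simp
      moreover have "x1 - x2 \<in> subfield2 s"
        using x1 x2 by (simp add: X_def minus_CHAR_2[OF char] subfield2_add[OF char])
      ultimately have "a + a ^ (2 ^ s) \<in> subfield2 s"
        by (simp add: e_def a'_def minus_CHAR_2[OF char])
      then show False
        using mem_subfield2_if_add_frobenius_mem[of s m a] card n a by simp
    qed
  qed
  then have "card X \<le> Suc 0"
    by (simp add: card_le_Suc0_iff_eq)
  then show ?thesis
    by (simp add: X_def)
qed

lemma gold_cdiff_root_mem_subfield2:
  fixes a b c x :: "'a::{field,finite}"
  assumes card: "card (UNIV :: 'a set) = 2 ^ n" and n: "n = s * m" "odd n" and "\<not> 3 dvd m"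
    and cop: "coprime k n" and "c \<noteq> 1"
    and a: "a \<in> subfield2 s" and b: "b \<in> subfield2 s" and c: "c \<in> subfield2 s"
    and root: "(x + a) ^ (2 ^ k + 1) + c * x ^ (2 ^ k + 1) = b"
  shows "x \<in> subfield2 s"
proof -
  have char: "CHAR('a) = 2"
    using CHAR_eq_2_if_card_eq_power_2[OF card] .
  define R where "R = {x. (x + a) ^ (2 ^ k + 1) + c * x ^ (2 ^ k + 1) = b}"
  define f where "f i = x ^ (2 ^ (s * i))" for i
  \<comment> \<open>The roots are permuted by the Frobenius of the subfield, so the orbit of \<open>x\<close> has at most 3 elements.\<close>
  have "f i \<in> R" for i
  proof -
    have "(1 * (x + a) ^ (2 ^ k + 1) + c * x ^ (2 ^ k + 1)) ^ (2 ^ (s * i))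
        = 1 ^ (2 ^ (s * i)) * (f i + a ^ (2 ^ (s * i))) ^ (2 ^ k + 1) + c ^ (2 ^ (s * i)) * f i ^ (2 ^ k + 1)"
      unfolding f_def by (rule shift_form_power_two_pow[OF char])
    then show ?thesis
      using root a b c by (simp add: power_two_pow_mult_eq_same R_def)
  qed
  then have "card (f ` {..3}) \<le> card R"
    by (intro card_mono) auto
  also have "\<dots> \<le> 3"
    unfolding R_def by (rule card_gold_cdiff_roots_le_3[OF card cop \<open>c \<noteq> 1\<close>])
  finally have "\<not> inj_on f {..3}"
    using card_image[of f "{..3::nat}"] by auto
  then obtain i j where ij: "i < j" "j \<le> 3" "f i = f j"
    unfolding inj_on_def by (metis atMost_iff linorder_neqE_nat)
  have "(x ^ (2 ^ (s * (j - i)))) ^ (2 ^ (s * i)) = x ^ (2 ^ (s * i))"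
    using ij by (simp add: f_def flip: power_mult power_add add_mult_distrib2)
  then have "x ^ (2 ^ (s * (j - i))) = x"
    by (rule power_two_pow_inj_CHAR_2[OF char])
  moreover have "coprime (j - i) m"
  proof -
    have "j - i \<in> {1, 2, 3}"
      using ij by auto
    moreover have "odd m"
      using n by simp
    ultimately show ?thesis
      using \<open>\<not> 3 dvd m\<close> by (auto simp: prime_imp_coprime)
  qed
  ultimately show ?thesis
    using mem_subfield2_if_coprime card n by blast
qed

definition switched_gold :: "nat \<Rightarrow> nat \<Rightarrow> 'a::field \<Rightarrow> 'a \<Rightarrow> 'a" where
  "switched_gold s k \<alpha> x = x ^ (2 ^ k + 1) + (if x \<in> subfield2 s then \<alpha> else 0)"

lemma switched_gold_eq:
  fixes x \<alpha> :: "'a::{field,finite}"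
  assumes card: "card (UNIV :: 'a set) = 2 ^ n"
  shows "x ^ (2 ^ k + 1) + \<alpha> + \<alpha> * (x ^ (2 ^ s) + x) ^ (2 ^ n - 1) = switched_gold s k \<alpha> x"
proof -
  have char: "CHAR('a) = 2"
    using CHAR_eq_2_if_card_eq_power_2[OF card] .
  have "x ^ (2 ^ s) + x = 0 \<longleftrightarrow> x \<in> subfield2 s"
    by (simp add: add_eq_iff_CHAR_2[OF char] subfield2_def)
  then show ?thesis
    using power_card_UNIV_minus_1[of "x ^ (2 ^ s) + x"] card
    by (simp add: switched_gold_def add.assoc add_self_CHAR_2[OF char])
qed

lemma switched_gold_cdiff:
  fixes x a c \<alpha> :: "'a::field"
  assumes "CHAR('a) = 2"
  shows "switched_gold s k \<alpha> (x + a) - c * switched_gold s k \<alpha> x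
       = (x + a) ^ (2 ^ k + 1) + c * x ^ (2 ^ k + 1)
         + (if x + a \<in> subfield2 s then \<alpha> else 0) + (if x \<in> subfield2 s then c * \<alpha> else 0)"
  by (simp add: switched_gold_def minus_CHAR_2[OF assms] algebra_simps)

lemma c_delta_switched_gold_shift_mem:
  fixes a b c \<alpha> :: "'a::{field,finite}"
  assumes card: "card (UNIV :: 'a set) = 2 ^ n" and n: "n = s * m" "odd n" and cop: "coprime k n"
    and \<alpha>: "\<alpha> \<in> subfield2 s" and c: "c \<in> subfield2 s" "c \<noteq> 1" and a: "a \<in> subfield2 s"
  shows "c_delta (switched_gold s k \<alpha>) c a b \<le> (if 3 dvd m then 6 else 3)"
proof -
  have char: "CHAR('a) = 2"
    using CHAR_eq_2_if_card_eq_power_2[OF card] .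
  define T where "T = {x. switched_gold s k \<alpha> (x + a) - c * switched_gold s k \<alpha> x = b}"
  define R where "R b' = {x. (x + a) ^ (2 ^ k + 1) + c * x ^ (2 ^ k + 1) = b'}" for b'
  have card_R: "card (R b') \<le> 3" for b'
    unfolding R_def by (rule card_gold_cdiff_roots_le_3[OF card cop \<open>c \<noteq> 1\<close>])
  have shift: "x + a \<in> subfield2 s \<longleftrightarrow> x \<in> subfield2 s" for x
  proof
    assume "x + a \<in> subfield2 s"
    then have "x + a + a \<in> subfield2 s"
      using a by (rule subfield2_add[OF char])
    then show "x \<in> subfield2 s"
      by (simp only: add_add_cancel_CHAR_2[OF char])
  next
    assume "x \<in> subfield2 s"
    then show "x + a \<in> subfield2 s"
      using a by (rule subfield2_add[OF char])
  qed
  have T: "x \<in> T \<longleftrightarrow> x \<in> R (b + (if x \<in> subfield2 s then \<alpha> + c * \<alpha> else 0))" for x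
  proof -
    have "switched_gold s k \<alpha> (x + a) - c * switched_gold s k \<alpha> x
        = (x + a) ^ (2 ^ k + 1) + c * x ^ (2 ^ k + 1) + (if x \<in> subfield2 s then \<alpha> + c * \<alpha> else 0)"
      by (simp add: switched_gold_cdiff[OF char] shift add.assoc)
    then show ?thesis
      unfolding T_def R_def mem_Collect_eq by (simp only: add_eq_iff_CHAR_2[OF char])
  qed
  have "T \<subseteq> R (b + (\<alpha> + c * \<alpha>)) \<union> R b"
    using T by (auto split: if_splits)
  then have "card T \<le> card (R (b + (\<alpha> + c * \<alpha>)) \<union> R b)"
    by (rule card_mono[OF finite])
  also have "\<dots> \<le> card (R (b + (\<alpha> + c * \<alpha>))) + card (R b)"
    by (rule card_Un_le)
  also have "\<dots> \<le> 6"
    using card_R[of b] card_R[of "b + (\<alpha> + c * \<alpha>)"] by simp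
  finally have "card T \<le> 6" .
  moreover have "card T \<le> 3" if "\<not> 3 dvd m"
  proof (cases "b \<in> subfield2 s")
    case True
    have "T \<subseteq> R (b + (\<alpha> + c * \<alpha>))"
    proof
      fix x assume "x \<in> T"
      have "x \<in> subfield2 s"
      proof (rule ccontr)
        assume "x \<notin> subfield2 s"
        with T[of x] \<open>x \<in> T\<close> have "(x + a) ^ (2 ^ k + 1) + c * x ^ (2 ^ k + 1) = b"
          by (simp add: R_def)
        with \<open>x \<notin> subfield2 s\<close> show False
          using gold_cdiff_root_mem_subfield2[OF card n \<open>\<not> 3 dvd m\<close> cop \<open>c \<noteq> 1\<close> a True c(1)] by blast
      qed
      with T[of x] \<open>x \<in> T\<close> show "x \<in> R (b + (\<alpha> + c * \<alpha>))"
        by simp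
    qed
    then show ?thesis
      using card_mono[OF finite] card_R le_trans by blast
  next
    case False
    have "\<alpha> + c * \<alpha> \<in> subfield2 s"
      using \<alpha> c(1) by (intro subfield2_add[OF char] subfield2_mult)
    then have "b + (\<alpha> + c * \<alpha>) \<notin> subfield2 s"
      using False subfield2_add[OF char] add_add_cancel_CHAR_2[OF char] by metis
    moreover have "(x + a) ^ (2 ^ k + 1) + c * x ^ (2 ^ k + 1) \<in> subfield2 s" if "x \<in> subfield2 s" for x
      using that a c(1) by (intro subfield2_add[OF char] subfield2_mult subfield2_power)
    ultimately have "T \<subseteq> R b"
      using T by (force simp: R_def)
    then show ?thesis
      using card_mono[OF finite] card_R le_trans by blast
  qed
  ultimately show ?thesis
    by (simp add: c_delta_def T_def minus_CHAR_2[OF char])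
qed

lemma c_delta_switched_gold_shift_not_mem:
  fixes a b c \<alpha> :: "'a::{field,finite}"
  assumes card: "card (UNIV :: 'a set) = 2 ^ n" and n: "n = s * m" "odd n" and cop: "coprime k n"
    and \<alpha>: "\<alpha> \<in> subfield2 s" and c: "c \<in> subfield2 s" "c \<noteq> 1" and a: "a \<notin> subfield2 s"
  shows "c_delta (switched_gold s k \<alpha>) c a b \<le> 5"
proof -
  have char: "CHAR('a) = 2"
    using CHAR_eq_2_if_card_eq_power_2[OF card] .
  define T where "T = {x. switched_gold s k \<alpha> (x + a) - c * switched_gold s k \<alpha> x = b}"
  define F1 where "F1 = {x \<in> subfield2 s. (x + a) ^ (2 ^ k + 1) + c * x ^ (2 ^ k + 1) = b + c * \<alpha>}"
  define F2 where "F2 = {u \<in> subfield2 s. c * (u + a) ^ (2 ^ k + 1) + u ^ (2 ^ k + 1) = b + \<alpha>}"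
  define R where "R = {x. (x + a) ^ (2 ^ k + 1) + c * x ^ (2 ^ k + 1) = b}"
  have F1: "card F1 \<le> 1"
    using card_subfield2_shift_form_roots_le_1[OF card n cop one_mem_subfield2 c(1) _ a, of "b + c * \<alpha>"]
    by (simp add: F1_def)
  have F2: "card F2 \<le> 1"
    using card_subfield2_shift_form_roots_le_1[OF card n cop c(1) one_mem_subfield2 _ a, of "b + \<alpha>"]
    by (simp add: F2_def)
  have R: "card R \<le> 3"
    unfolding R_def by (rule card_gold_cdiff_roots_le_3[OF card cop \<open>c \<noteq> 1\<close>])
  have "T \<subseteq> F1 \<union> (\<lambda>u. u + a) ` F2 \<union> R"
  proof
    fix x assume x: "x \<in> T"
    have cdiff: "(x + a) ^ (2 ^ k + 1) + c * x ^ (2 ^ k + 1)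
        + (if x + a \<in> subfield2 s then \<alpha> else 0) + (if x \<in> subfield2 s then c * \<alpha> else 0) = b"
      using x by (simp add: T_def switched_gold_cdiff[OF char])
    consider (mem) "x \<in> subfield2 s"
      | (shift_mem) "x \<notin> subfield2 s" "x + a \<in> subfield2 s"
      | (none) "x \<notin> subfield2 s" "x + a \<notin> subfield2 s"
      by blast
    then show "x \<in> F1 \<union> (\<lambda>u. u + a) ` F2 \<union> R"
    proof cases
      case mem
      have "x + a \<notin> subfield2 s"
      proof
        assume "x + a \<in> subfield2 s"
        then have "x + a + x \<in> subfield2 s"
          using mem by (rule subfield2_add[OF char])
        then show False
          using a by (metis add.commute add_add_cancel_CHAR_2[OF char])
      qed
      with mem cdiff have "(x + a) ^ (2 ^ k + 1) + c * x ^ (2 ^ k + 1) + c * \<alpha> = b"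
        by simp
      then have "(x + a) ^ (2 ^ k + 1) + c * x ^ (2 ^ k + 1) = b + c * \<alpha>"
        by (rule add_eq_iff_CHAR_2[OF char, THEN iffD1])
      with mem show ?thesis
        by (simp add: F1_def)
    next
      case shift_mem
      from shift_mem cdiff have "(x + a) ^ (2 ^ k + 1) + c * x ^ (2 ^ k + 1) + \<alpha> = b"
        by simp
      then have "(x + a) ^ (2 ^ k + 1) + c * x ^ (2 ^ k + 1) = b + \<alpha>"
        by (rule add_eq_iff_CHAR_2[OF char, THEN iffD1])
      moreover have "x + a + a = x"
        by (rule add_add_cancel_CHAR_2[OF char])
      ultimately have "x + a \<in> F2"
        using shift_mem unfolding F2_def mem_Collect_eq \<open>x + a + a = x\<close> by (simp add: add.commute)
      then show ?thesis
        using \<open>x + a + a = x\<close> by (metis UnI1 UnI2 image_eqI)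
    next
      case none
      with cdiff show ?thesis
        by (simp add: R_def)
    qed
  qed
  then have "card T \<le> card (F1 \<union> (\<lambda>u. u + a) ` F2 \<union> R)"
    by (rule card_mono[OF finite])
  also have "\<dots> \<le> card F1 + card ((\<lambda>u. u + a) ` F2) + card R"
    using card_Un_le[of "F1 \<union> (\<lambda>u. u + a) ` F2" R] card_Un_le[of F1 "(\<lambda>u. u + a) ` F2"] by simp
  also have "\<dots> \<le> 5"
    using F1 F2 R card_image_le[OF finite, of "\<lambda>u. u + a" F2] by simp
  finally show ?thesis
    by (simp add: c_delta_def T_def)
qed

lemma c_diff_unif_le:
  fixes F :: "'a::{field,finite} \<Rightarrow> 'a"
  assumes "\<And>a b. c_delta F c a b \<le> N"
  shows "c_diff_unif F c \<le> N"
  unfolding c_diff_unif_def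
proof (rule Max.boundedI)
  have "{c_delta F c a b | a b. a \<noteq> 0 \<or> c \<noteq> 1} \<subseteq> range (\<lambda>(a, b). c_delta F c a b)"
    by auto
  then show "finite {c_delta F c a b | a b. a \<noteq> 0 \<or> c \<noteq> 1}"
    by (rule finite_subset) simp
  have "c_delta F c 1 0 \<in> {c_delta F c a b | a b. a \<noteq> 0 \<or> c \<noteq> 1}"
    by auto
  then show "{c_delta F c a b | a b. a \<noteq> 0 \<or> c \<noteq> 1} \<noteq> {}"
    by blast
qed (use assms in auto)

theorem theorem2p14:
  fixes \<alpha> :: "'a::{field,finite}" and s m n k :: nat
  assumes "s > 0" and "m > 0" and "n = s * m" and "odd n"
    and "card (UNIV :: 'a set) = 2 ^ n"
    and "k > 0" and "gcd n k = 1"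
    and "\<alpha> \<in> subfield2 s" and "\<alpha> \<noteq> 0"
  defines "G \<equiv> (\<lambda>x::'a. x ^ (2 ^ k + 1) + \<alpha> + \<alpha> * (x ^ (2 ^ s) + x) ^ (2 ^ n - 1))"
  shows "(\<forall>c \<in> subfield2 s - {1}. c_diff_unif G c \<le> 6)
       \<and> (\<not> 3 dvd m \<longrightarrow> (\<forall>c \<in> subfield2 s - {1}. c_diff_unif G c \<le> 5))"
proof -
  have cop: "coprime k n"
    using \<open>gcd n k = 1\<close> by (simp add: coprime_iff_gcd_eq_1 gcd.commute)
  have G: "G = switched_gold s k \<alpha>"
    unfolding G_def using switched_gold_eq[OF \<open>card (UNIV :: 'a set) = 2 ^ n\<close>] by blast
  have "c_delta G c a b \<le> (if 3 dvd m then 6 else 5)" if "c \<in> subfield2 s - {1}" for c a b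
    using c_delta_switched_gold_shift_mem[OF assms(5,3,4) cop assms(8), of c a b]
      c_delta_switched_gold_shift_not_mem[OF assms(5,3,4) cop assms(8), of c a b] that
    by (cases "a \<in> subfield2 s") (auto simp: G split: if_splits)
  then have bound: "c_diff_unif G c \<le> (if 3 dvd m then 6 else 5)" if "c \<in> subfield2 s - {1}" for c
    using that by (intro c_diff_unif_le) blast
  have "c_diff_unif G c \<le> 6" if "c \<in> subfield2 s - {1}" for c
    using bound[OF that] by (simp split: if_splits)
  moreover have "c_diff_unif G c \<le> 5" if "c \<in> subfield2 s - {1}" and "\<not> 3 dvd m" for c
    using bound[OF that(1)] that(2) by simp
  ultimately show ?thesis
    by blast
qed

end
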